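(* Let $b>0$ and $\beta>0$. Let $\alpha(\theta)=\frac{1-\cos\theta}{\theta-\sin\theta}$ for $\theta\in(0,2\pi)$, let $\tilde\theta\in(0,2\pi)$ be the unique number with $\alpha(\tilde\theta)=\beta/b$, and let $k=\frac{2\beta}{1-\cos\tilde\theta}$. Let $\gamma_0:[0,b]\to\mathbb{R}$ be the function whose graph is the curve $\theta\mapsto\left(\frac{k}{2}(\theta-\sin\theta),\ \frac{k}{2}(1-\cos\theta)\right)$, $\theta\in[0,\tilde\theta]$, and let $\delta_0=(2\gamma_0)^{1/2}$. Let $Y$ be the set of all $\delta\in C([0,b])$ which are continuously differentiable on $(0,b]$, with $\delta(t)>0$ for $t\in(0,b]$, $\delta(0)=0$, $\delta(b)=(2\beta)^{1/2}$, and such that the improper integral $$\mathcal{M}(\delta)=\int_0^b\left(\delta(t)^{-2}+\delta'(t)^2\right)^{1/2}dt$$ is defined (finite). Then $\delta_0$ is the unique minimum of $\mathcal{M}$ on $Y$.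
   Context: The function $\alpha$ is a strictly decreasing bijection from $(0,2\pi)$ onto $(0,\infty)$, so $\tilde\theta$ is well defined; with this choice of $k$, the curve starts at $(0,0)$ and ends at $(b,\beta)$, and $\theta\mapsto\frac{k}{2}(\theta-\sin\theta)$ is strictly increasing, so the curve is the graph of a function on $[0,b]$. *)

theory Defs
  imports "HOL-Analysis.Analysis"
begin

definition alpha :: "real \<Rightarrow> real" where
  "alpha \<theta> = (1 - cos \<theta>) / (\<theta> - sin \<theta>)"

definition theta_t :: "real \<Rightarrow> real \<Rightarrow> real" where
  "theta_t b \<beta> = (THE \<theta>. \<theta> \<in> {0<..<2*pi} \<and> alpha \<theta> = \<beta> / b)"

definition kk :: "real \<Rightarrow> real \<Rightarrow> real" where
  "kk b \<beta> = 2 * \<beta> / (1 - cos (theta_t b \<beta>))"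

definition gamma0 :: "real \<Rightarrow> real \<Rightarrow> real \<Rightarrow> real" where
  "gamma0 b \<beta> t =
     (let k = kk b \<beta>;
          \<theta> = (THE \<theta>. \<theta> \<in> {0..theta_t b \<beta>} \<and> k / 2 * (\<theta> - sin \<theta>) = t)
      in k / 2 * (1 - cos \<theta>))"

definition delta0 :: "real \<Rightarrow> real \<Rightarrow> real \<Rightarrow> real" where
  "delta0 b \<beta> t = sqrt (2 * gamma0 b \<beta> t)"

definition C1_deriv_on :: "(real \<Rightarrow> real) \<Rightarrow> real \<Rightarrow> (real \<Rightarrow> real) \<Rightarrow> bool" where
  "C1_deriv_on \<delta> b D \<longleftrightarrow>
     (\<forall>t\<in>{0<..b}. (\<delta> has_real_derivative D t) (at t within {0<..b})) \<and>
     continuous_on {0<..b} D"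

definition dY :: "(real \<Rightarrow> real) \<Rightarrow> real \<Rightarrow> real \<Rightarrow> real" where
  "dY \<delta> b = (SOME D. C1_deriv_on \<delta> b D)"

definition M_int :: "real \<Rightarrow> (real \<Rightarrow> real) \<Rightarrow> real \<Rightarrow> real" where
  "M_int b \<delta> e = integral {e..b} (\<lambda>t. sqrt (inverse (\<delta> t ^ 2) + (dY \<delta> b t) ^ 2))"

definition M_defined :: "real \<Rightarrow> (real \<Rightarrow> real) \<Rightarrow> bool" where
  "M_defined b \<delta> \<longleftrightarrow> (\<exists>L. (M_int b \<delta> \<longlongrightarrow> L) (at_right 0))"

definition M :: "real \<Rightarrow> (real \<Rightarrow> real) \<Rightarrow> real" where
  "M b \<delta> = Lim (at_right 0) (M_int b \<delta>)"

definition Y :: "real \<Rightarrow> real \<Rightarrow> (real \<Rightarrow> real) set" where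
  "Y b \<beta> = {\<delta>. continuous_on {0..b} \<delta> \<and> (\<exists>D. C1_deriv_on \<delta> b D) \<and>
               (\<forall>t\<in>{0<..b}. \<delta> t > 0) \<and> \<delta> 0 = 0 \<and> \<delta> b = sqrt (2 * \<beta>) \<and>
               M_defined b \<delta>}"

end

theory Submission
  imports Defs "HOL-Real_Asymp.Real_Asymp"
begin

text \<open>Writing \<open>y = \<delta>\<^sup>2/2\<close>, the integrand of \<open>M\<close> becomes the brachistochrone integrand
  \<open>\<surd>(dt\<^sup>2 + dy\<^sup>2) / \<surd>(2y)\<close>. Every point \<open>(t, y)\<close> with \<open>t, y > 0\<close> lies on exactly one cycloid
  \<open>c (\<theta> - sin \<theta>, 1 - cos \<theta>)\<close> through the origin with \<open>0 < \<theta> < 2\<pi>\<close>, namely the one with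
  \<open>\<alpha>(\<theta>) = y/t\<close>, and the integral of this integrand along that cycloid from the origin to the point is
  \<open>S = \<surd>c \<theta>\<close>.
  The function \<open>S\<close> is a calibration: along any admissible \<open>\<delta>\<close> its derivative is at most the integrand,
  with equality exactly where the scale \<open>c\<close> is stationary. Since \<open>S\<close> tends to \<open>0\<close> at the origin,
  integrating gives \<open>M(\<delta>) \<ge> S(b)\<close>, which depends only on \<open>\<delta>(b)\<close>; equality forces \<open>c\<close> to be constant,
  i.e. \<open>\<delta>\<close> to follow the single cycloid through the endpoint, which is \<open>\<delta>\<^sub>0\<close>.\<close>

section \<open>The function \<open>alpha\<close> and its inverse\<close>

lemma one_minus_cos_pos:
  fixes \<theta> :: real
  assumes "0 < \<theta>" "\<theta> < 2*pi"
  shows "0 < 1 - cos \<theta>"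
  using cos_double_sin[of "\<theta>/2"] sin_gt_zero[of "\<theta>/2"] assms by simp

lemma half_angle_sin: "sin (\<theta>::real) = 2 * sin (\<theta>/2) * cos (\<theta>/2)"
  using sin_double[of "\<theta>/2"] by simp

lemma half_angle_one_minus_cos: "1 - cos (\<theta>::real) = 2 * sin (\<theta>/2)^2"
  using cos_double_sin[of "\<theta>/2"] by simp

lemma diff_sin_strict_mono_on: "strict_mono_on {0..2*pi} (\<lambda>\<theta>::real. \<theta> - sin \<theta>)"
proof (rule strict_mono_onI)
  fix a c :: real
  assume "a \<in> {0..2*pi}" "c \<in> {0..2*pi}" "a < c"
  then show "a - sin a < c - sin c"
    using DERIV_pos_imp_increasing_open[of a c "\<lambda>\<theta>. \<theta> - sin \<theta>"] one_minus_cos_pos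
    by (force intro!: derivative_eq_intros continuous_intros)
qed

lemma sin_less_self:
  fixes x :: real
  assumes "0 < x"
  shows "sin x < x"
proof (cases "x \<le> 2*pi")
  case True
  then show ?thesis
    using strict_mono_onD[OF diff_sin_strict_mono_on, of 0 x] assms by simp
next
  case False
  then show ?thesis using sin_le_one[of x] pi_gt3 by linarith
qed

lemma x_cos_less_sin:
  fixes x :: real
  assumes "0 < x" "x < pi"
  shows "x * cos x < sin x"
proof -
  have "(\<lambda>y. sin y - y * cos y) 0 < (\<lambda>y. sin y - y * cos y) x"
  proof (rule DERIV_pos_imp_increasing_open[OF assms(1)])
    fix y assume "0 < y" "y < x"
    with assms show "\<exists>d. ((\<lambda>y. sin y - y * cos y) has_real_derivative d) (at y) \<and> 0 < d"
      by (intro exI[of _ "y * sin y"] conjI derivative_eq_intros refl)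
         (auto simp: sin_gt_zero)
  qed (intro continuous_intros)
  then show ?thesis by simp
qed

lemma alpha_continuous_on: "continuous_on {0<..} alpha"
  unfolding alpha_def[abs_def]
  by (intro continuous_intros) (auto dest: sin_less_self)

lemma alpha_pos: "0 < \<theta> \<Longrightarrow> \<theta> < 2*pi \<Longrightarrow> 0 < alpha \<theta>"
  unfolding alpha_def using one_minus_cos_pos sin_less_self by simp

lemma alpha_has_negative_derivative:
  assumes "0 < \<theta>" "\<theta> < 2*pi"
  obtains a' where "(alpha has_real_derivative a') (at \<theta>)" "a' < 0"
proof
  let ?s = "sin (\<theta>/2)" and ?q = "cos (\<theta>/2)"
  have v: "0 < \<theta> - sin \<theta>" using sin_less_self assms by simp
  show "(alpha has_real_derivative (sin \<theta> * (\<theta> - sin \<theta>) - (1 - cos \<theta>)^2) / (\<theta> - sin \<theta>)^2) (at \<theta>)"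
    unfolding alpha_def[abs_def] using v
    by (auto intro!: derivative_eq_intros simp: power2_eq_square field_simps)
  have "sin \<theta> * (\<theta> - sin \<theta>) - (1 - cos \<theta>)^2 = 2 * ?s * (\<theta> * ?q - 2 * ?s)"
    using half_angle_sin[of \<theta>] half_angle_one_minus_cos[of \<theta>] sin_cos_squared_add[of "\<theta>/2"]
    by algebra
  moreover have "0 < ?s" "\<theta>/2 * ?q < ?s"
    using sin_gt_zero[of "\<theta>/2"] x_cos_less_sin[of "\<theta>/2"] assms by auto
  ultimately show "(sin \<theta> * (\<theta> - sin \<theta>) - (1 - cos \<theta>)^2) / (\<theta> - sin \<theta>)^2 < 0"
    using v by (simp add: divide_neg_pos mult_pos_neg)
qed

lemma alpha_strict_antimono:
  assumes "0 < a" "a < c" "c < 2*pi"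
  shows "alpha c < alpha a"
proof (rule DERIV_neg_imp_decreasing_open[OF assms(2)])
  fix x assume "a < x" "x < c"
  with assms obtain a' where "(alpha has_real_derivative a') (at x)" "a' < 0"
    using alpha_has_negative_derivative[of x] by auto
  then show "\<exists>y. (alpha has_real_derivative y) (at x) \<and> y < 0" by blast
next
  show "continuous_on {a..c} alpha"
    using assms by (intro continuous_on_subset[OF alpha_continuous_on]) auto
qed

lemma alpha_inj: "0 < a \<Longrightarrow> a < 2*pi \<Longrightarrow> 0 < c \<Longrightarrow> c < 2*pi \<Longrightarrow> alpha a = alpha c \<Longrightarrow> a = c"
  using alpha_strict_antimono[of a c] alpha_strict_antimono[of c a] by (cases a c rule: linorder_cases) auto

lemma alpha_surj:
  assumes "0 < r"
  obtains \<theta> where "0 < \<theta>" "\<theta> < 2*pi" "alpha \<theta> = r"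
proof -
  have "filterlim alpha at_top (at_right 0)"
    unfolding alpha_def by real_asymp
  then have "\<forall>\<^sub>F x in at_right 0. r < alpha x"
    by (simp add: filterlim_at_top_dense)
  moreover have "\<forall>\<^sub>F x in at_right 0. 0 < x \<and> x < 2*pi"
    using eventually_at_right_real[of 0 "2*pi"] by simp
  ultimately have "\<forall>\<^sub>F x in at_right 0. r < alpha x \<and> 0 < x \<and> x < 2*pi"
    by eventually_elim auto
  then obtain t where t: "r < alpha t" "0 < t" "t < 2*pi"
    using eventually_happens[of _ "at_right (0::real)"] by (auto simp: trivial_limit_at_right_real)
  have "continuous_on {t..2*pi} alpha"
    using t by (intro continuous_on_subset[OF alpha_continuous_on]) auto
  moreover have "alpha (2*pi) = 0"
    by (simp add: alpha_def)
  ultimately obtain \<theta> where "t \<le> \<theta>" "\<theta> \<le> 2*pi" "alpha \<theta> = r"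
    using IVT2'[of alpha "2*pi" r t] t assms by force
  moreover have "\<theta> \<noteq> 2*pi"
    using \<open>alpha (2*pi) = 0\<close> \<open>alpha \<theta> = r\<close> assms by auto
  ultimately show ?thesis
    using t(2) by (intro that) auto
qed

definition alpha_inv :: "real \<Rightarrow> real" where
  "alpha_inv r = (THE \<theta>. \<theta> \<in> {0<..<2*pi} \<and> alpha \<theta> = r)"

lemma alpha_inv:
  assumes "0 < r"
  shows "0 < alpha_inv r" "alpha_inv r < 2*pi" "alpha (alpha_inv r) = r"
proof -
  obtain \<theta> where \<theta>: "0 < \<theta>" "\<theta> < 2*pi" "alpha \<theta> = r"
    using alpha_surj[OF assms] .
  have "alpha_inv r = \<theta>"
    unfolding alpha_inv_def by (rule the_equality) (use \<theta> alpha_inj in auto)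
  with \<theta> show "0 < alpha_inv r" "alpha_inv r < 2*pi" "alpha (alpha_inv r) = r" by auto
qed

lemma alpha_inv_alpha: "0 < \<theta> \<Longrightarrow> \<theta> < 2*pi \<Longrightarrow> alpha_inv (alpha \<theta>) = \<theta>"
  using alpha_inv[of "alpha \<theta>"] alpha_pos alpha_inj by auto

lemma isCont_alpha_inv:
  assumes "0 < r"
  shows "isCont alpha_inv r"
proof -
  define \<theta> where "\<theta> = alpha_inv r"
  have \<theta>: "0 < \<theta>" "\<theta> < 2*pi" "alpha \<theta> = r"
    using alpha_inv[OF assms] by (auto simp: \<theta>_def)
  have "isCont alpha_inv (alpha \<theta>)"
  proof (rule isCont_inverse_function2[where f=alpha and x=\<theta> and a="\<theta>/2" and b="\<theta>/2 + pi"])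
    fix z assume "\<theta>/2 \<le> z" "z \<le> \<theta>/2 + pi"
    with \<theta> show "alpha_inv (alpha z) = z"
      by (intro alpha_inv_alpha) auto
  next
    fix z assume "\<theta>/2 \<le> z" "z \<le> \<theta>/2 + pi"
    with \<theta> show "isCont alpha z"
      using continuous_on_interior[OF alpha_continuous_on, of z] by (simp add: interior_open)
  qed (use \<theta> in auto)
  with \<theta> show ?thesis by simp
qed

lemma continuous_on_alpha_inv: "continuous_on {0<..} alpha_inv"
  by (intro continuous_at_imp_continuous_on ballI isCont_alpha_inv) simp

lemma alpha_inv_differentiable:
  assumes "0 < r"
  obtains A' where "(alpha_inv has_real_derivative A') (at r)"
proof -
  obtain a' where "(alpha has_real_derivative a') (at (alpha_inv r))" "a' < 0"
    using alpha_has_negative_derivative alpha_inv[OF assms] by metis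
  then have "(alpha_inv has_real_derivative inverse a') (at r)"
    by (intro DERIV_inverse_function[where a=0 and b="r+1"] isCont_alpha_inv)
       (use assms alpha_inv in auto)
  then show ?thesis by (rule that)
qed

section \<open>Cycloid coordinates of a curve\<close>

text \<open>For \<open>t > 0\<close> and \<open>\<delta> t \<noteq> 0\<close> the point \<open>(t, \<delta> t\<^sup>2 / 2)\<close> is \<open>c (\<theta> - sin \<theta>, 1 - cos \<theta>)\<close> with
  \<open>\<theta> = cycloid_angle \<delta> t\<close> and \<open>c = cycloid_scale \<delta> t\<close>; \<open>cycloid_time_rate \<delta> D\<close> is the derivative of
  \<open>cycloid_time \<delta>\<close> when \<open>D\<close> is the derivative of \<open>\<delta>\<close>.\<close>

definition cycloid_angle :: "(real \<Rightarrow> real) \<Rightarrow> real \<Rightarrow> real" where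
  "cycloid_angle \<delta> t = alpha_inv (\<delta> t ^ 2 / 2 / t)"

definition cycloid_scale :: "(real \<Rightarrow> real) \<Rightarrow> real \<Rightarrow> real" where
  "cycloid_scale \<delta> t = \<delta> t ^ 2 / 2 / (1 - cos (cycloid_angle \<delta> t))"

definition cycloid_time :: "(real \<Rightarrow> real) \<Rightarrow> real \<Rightarrow> real" where
  "cycloid_time \<delta> t = sqrt (cycloid_scale \<delta> t) * cycloid_angle \<delta> t"

definition cycloid_time_rate :: "(real \<Rightarrow> real) \<Rightarrow> (real \<Rightarrow> real) \<Rightarrow> real \<Rightarrow> real" where
  "cycloid_time_rate \<delta> D t =
     (sin (cycloid_angle \<delta> t / 2) + \<delta> t * D t * cos (cycloid_angle \<delta> t / 2)) / \<delta> t"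

definition M_integrand :: "(real \<Rightarrow> real) \<Rightarrow> (real \<Rightarrow> real) \<Rightarrow> real \<Rightarrow> real" where
  "M_integrand \<delta> D t = sqrt (inverse (\<delta> t ^ 2) + D t ^ 2)"

lemma cycloid_angle_bounds:
  assumes "0 < t" "\<delta> t \<noteq> 0"
  shows "0 < cycloid_angle \<delta> t" "cycloid_angle \<delta> t < 2*pi"
  using alpha_inv[of "\<delta> t ^ 2 / 2 / t"] assms by (auto simp: cycloid_angle_def)

lemma cycloid_scale_pos: "0 < t \<Longrightarrow> \<delta> t \<noteq> 0 \<Longrightarrow> 0 < cycloid_scale \<delta> t"
  using cycloid_angle_bounds one_minus_cos_pos by (simp add: cycloid_scale_def)

lemma cycloid_point:
  assumes "0 < t" "\<delta> t \<noteq> 0"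
  defines "\<theta> \<equiv> cycloid_angle \<delta> t"
  shows "t = cycloid_scale \<delta> t * (\<theta> - sin \<theta>)"
    and "\<delta> t ^ 2 / 2 = cycloid_scale \<delta> t * (1 - cos \<theta>)"
proof -
  have \<theta>: "0 < \<theta>" "\<theta> < 2*pi" "alpha \<theta> = \<delta> t ^ 2 / 2 / t"
    using alpha_inv[of "\<delta> t ^ 2 / 2 / t"] assms by (auto simp: cycloid_angle_def)
  then have u: "0 < 1 - cos \<theta>" and v: "0 < \<theta> - sin \<theta>"
    using one_minus_cos_pos sin_less_self by auto
  have c: "cycloid_scale \<delta> t = \<delta> t ^ 2 / 2 / (1 - cos \<theta>)"
    by (simp add: cycloid_scale_def \<theta>_def)
  have "(1 - cos \<theta>) / (\<theta> - sin \<theta>) = \<delta> t ^ 2 / 2 / t"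
    using \<theta>(3) by (simp add: alpha_def)
  with u v assms(1) show "t = cycloid_scale \<delta> t * (\<theta> - sin \<theta>)"
    unfolding c by (simp add: field_simps)
  from u show "\<delta> t ^ 2 / 2 = cycloid_scale \<delta> t * (1 - cos \<theta>)"
    unfolding c by (simp add: field_simps)
qed

lemma cycloid_coordinates_unique:
  assumes t: "0 < t" and c: "0 < c" and \<theta>: "0 < \<theta>" "\<theta> < 2*pi"
    and x: "t = c * (\<theta> - sin \<theta>)" and y: "\<delta> t ^ 2 / 2 = c * (1 - cos \<theta>)"
  shows "cycloid_angle \<delta> t = \<theta>" "cycloid_scale \<delta> t = c"
proof -
  have "0 < 1 - cos \<theta>" "0 < \<theta> - sin \<theta>"
    using one_minus_cos_pos[OF \<theta>] sin_less_self[OF \<theta>(1)] by auto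
  have "\<delta> t ^ 2 / 2 / t = c * (1 - cos \<theta>) / (c * (\<theta> - sin \<theta>))"
    by (simp only: y) (use x in simp)
  then have "alpha \<theta> = \<delta> t ^ 2 / 2 / t"
    using c by (simp add: alpha_def)
  then show angle: "cycloid_angle \<delta> t = \<theta>"
    using alpha_inv_alpha[OF \<theta>] by (simp add: cycloid_angle_def)
  show "cycloid_scale \<delta> t = c"
    using \<open>0 < 1 - cos \<theta>\<close> by (simp add: cycloid_scale_def angle y)
qed

lemma cycloid_rates:
  fixes c \<theta> c' \<theta>' y' :: real
  assumes c: "0 < c" and \<theta>: "0 < \<theta>" "\<theta> < 2*pi"
    and t': "c' * (\<theta> - sin \<theta>) + c * (1 - cos \<theta>) * \<theta>' = 1"
    and y': "c' * (1 - cos \<theta>) + c * sin \<theta> * \<theta>' = y'"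
  shows "sqrt (2 * c * (1 - cos \<theta>)) * (c' * \<theta> / (2 * sqrt c) + sqrt c * \<theta>') =
           sin (\<theta>/2) + y' * cos (\<theta>/2)"
    and "cos (\<theta>/2) - y' * sin (\<theta>/2) = c' * (\<theta> * cos (\<theta>/2) - 2 * sin (\<theta>/2))"
proof -
  define s q where "s = sin (\<theta>/2)" and "q = cos (\<theta>/2)"
  have sq: "s^2 + q^2 = 1" by (simp add: s_def q_def)
  have sin: "sin \<theta> = 2 * s * q" and u: "1 - cos \<theta> = 2 * s^2"
    unfolding s_def q_def by (rule half_angle_sin half_angle_one_minus_cos)+
  have "0 < s" using \<theta> by (simp add: s_def q_def sin_gt_zero)
  have "2 * c * (1 - cos \<theta>) = (2 * s)^2 * c"
    by (simp add: u power2_eq_square)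
  with \<open>0 < s\<close> have "sqrt (2 * c * (1 - cos \<theta>)) = 2 * s * sqrt c"
    by (simp only: real_sqrt_mult real_sqrt_abs)
  also have "\<dots> * (c' * \<theta> / (2 * sqrt c) + sqrt c * \<theta>') = s * c' * \<theta> + 2 * c * \<theta>' * s"
    using c by (simp add: field_simps)
  also have "\<dots> = s + y' * q"
    using sq t' y' unfolding sin u by algebra
  finally show "sqrt (2 * c * (1 - cos \<theta>)) * (c' * \<theta> / (2 * sqrt c) + sqrt c * \<theta>') =
      sin (\<theta>/2) + y' * cos (\<theta>/2)"
    by (simp add: s_def q_def)
  have "q - y' * s = c' * (\<theta> * q - 2 * s)"
    using sq t' y' unfolding sin u by algebra
  then show "cos (\<theta>/2) - y' * sin (\<theta>/2) = c' * (\<theta> * cos (\<theta>/2) - 2 * sin (\<theta>/2))"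
    by (simp add: s_def q_def)
qed

lemma unit_combination_le_sqrt:
  fixes s q x :: real
  assumes "s^2 + q^2 = 1"
  shows "s + x * q \<le> sqrt (1 + x^2)"
proof (rule real_le_rsqrt)
  have "(s + x * q)^2 + (q - x * s)^2 = 1 + x^2"
    using assms by algebra
  then show "(s + x * q)^2 \<le> 1 + x^2"
    by (metis le_add_same_cancel1 zero_le_power2)
qed

lemma unit_combination_eq_sqrt_iff:
  fixes s q x :: real
  assumes "s^2 + q^2 = 1" "0 < s"
  shows "s + x * q = sqrt (1 + x^2) \<longleftrightarrow> q = x * s"
proof -
  have sum: "(s + x * q)^2 + (q - x * s)^2 = 1 + x^2"
    using assms(1) by algebra
  show ?thesis
  proof
    assume "s + x * q = sqrt (1 + x^2)"
    then have "(s + x * q)^2 = 1 + x^2" by simp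
    with sum show "q = x * s" by simp
  next
    assume q: "q = x * s"
    then have "s + x * q = s * (1 + x^2)"
      by (simp add: algebra_simps power2_eq_square)
    then have "0 \<le> s + x * q"
      using assms(2) by simp
    moreover have "(s + x * q)^2 = 1 + x^2"
      using sum q by simp
    ultimately show "s + x * q = sqrt (1 + x^2)"
      by (metis real_sqrt_unique)
  qed
qed

lemma cycloid_time_rate_le:
  assumes "0 < t" "0 < \<delta> t"
  defines "\<theta> \<equiv> cycloid_angle \<delta> t"
  shows "cycloid_time_rate \<delta> D t \<le> M_integrand \<delta> D t"
    and "cycloid_time_rate \<delta> D t = M_integrand \<delta> D t \<longleftrightarrow> cos (\<theta>/2) = \<delta> t * D t * sin (\<theta>/2)"
proof -
  have sq: "sin (\<theta>/2)^2 + cos (\<theta>/2)^2 = 1" by simp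
  have "0 < sin (\<theta>/2)"
    using cycloid_angle_bounds[of t \<delta>] assms by (simp add: sin_gt_zero)
  have rate: "cycloid_time_rate \<delta> D t = (sin (\<theta>/2) + \<delta> t * D t * cos (\<theta>/2)) / \<delta> t"
    by (simp add: cycloid_time_rate_def \<theta>_def)
  have "inverse (\<delta> t ^ 2) + D t ^ 2 = (1 + (\<delta> t * D t)^2) / \<delta> t ^ 2"
    using assms(2) by (simp add: field_simps)
  then have L: "M_integrand \<delta> D t = sqrt (1 + (\<delta> t * D t)^2) / \<delta> t"
    using assms(2) by (simp add: M_integrand_def real_sqrt_divide)
  show "cycloid_time_rate \<delta> D t \<le> M_integrand \<delta> D t"
    unfolding rate L using unit_combination_le_sqrt[OF sq] assms(2) by (simp add: divide_right_mono)
  show "cycloid_time_rate \<delta> D t = M_integrand \<delta> D t \<longleftrightarrow> cos (\<theta>/2) = \<delta> t * D t * sin (\<theta>/2)"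
    unfolding rate L using unit_combination_eq_sqrt_iff[OF sq \<open>0 < sin (\<theta>/2)\<close>] assms(2)
    by simp
qed

lemma eventually_positive_nhds:
  fixes \<delta> :: "real \<Rightarrow> real"
  assumes "0 < t" "0 < \<delta> t" "isCont \<delta> t"
  shows "\<forall>\<^sub>F x in nhds t. 0 < x \<and> 0 < \<delta> x"
proof -
  have "(\<delta> \<longlongrightarrow> \<delta> t) (nhds t)"
    using assms(3) by (simp add: isCont_def tendsto_at_iff_tendsto_nhds)
  then have "\<forall>\<^sub>F x in nhds t. 0 < \<delta> x"
    using assms(2) by (rule order_tendstoD(1))
  moreover have "\<forall>\<^sub>F x in nhds t. x \<in> {0<..}"
    using assms(1) by (intro eventually_nhds_in_open) auto
  ultimately show ?thesis
    by eventually_elim simp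
qed

lemma cycloid_coordinates_differentiable:
  assumes t: "0 < t" and pos: "0 < \<delta> t" and \<delta>': "(\<delta> has_real_derivative D t) (at t)"
  obtains \<theta>' c' where "(cycloid_angle \<delta> has_real_derivative \<theta>') (at t)"
    and "(cycloid_scale \<delta> has_real_derivative c') (at t)"
proof -
  have "0 < \<delta> t ^ 2 / 2 / t"
    using t pos by simp
  then obtain A' where "(alpha_inv has_real_derivative A') (at (\<delta> t ^ 2 / 2 / t))"
    by (rule alpha_inv_differentiable)
  moreover have "((\<lambda>x. \<delta> x ^ 2 / 2 / x) has_real_derivative
      (\<delta> t * D t * t - \<delta> t ^ 2 / 2) / t^2) (at t)"
    using \<delta>' t by (auto intro!: derivative_eq_intros simp: power2_eq_square field_simps)
  ultimately have "(cycloid_angle \<delta> has_real_derivative A' * ((\<delta> t * D t * t - \<delta> t ^ 2 / 2) / t^2)) (at t)"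
    unfolding cycloid_angle_def[abs_def] by (rule DERIV_chain2)
  then obtain \<theta>' where d\<theta>: "(cycloid_angle \<delta> has_real_derivative \<theta>') (at t)" ..
  have "0 < 1 - cos (cycloid_angle \<delta> t)"
    using cycloid_angle_bounds t pos one_minus_cos_pos by simp
  then have "\<exists>c'. (cycloid_scale \<delta> has_real_derivative c') (at t)"
    unfolding cycloid_scale_def[abs_def] using \<delta>' d\<theta>
    by (intro exI derivative_eq_intros refl) auto
  with d\<theta> that show ?thesis
    by auto
qed

text \<open>The derivatives of the cycloid coordinates are never computed: differentiating the two identities
  of \<open>cycloid_point\<close>, which hold near \<open>t\<close>, yields two linear relations between them.\<close>

lemma cycloid_coordinates_has_derivative:
  assumes t: "0 < t" and pos: "0 < \<delta> t" and \<delta>': "(\<delta> has_real_derivative D t) (at t)"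
  defines "\<theta> \<equiv> cycloid_angle \<delta> t" and "c \<equiv> cycloid_scale \<delta> t"
  obtains \<theta>' c' where "(cycloid_angle \<delta> has_real_derivative \<theta>') (at t)"
    and "(cycloid_scale \<delta> has_real_derivative c') (at t)"
    and "c' * (\<theta> - sin \<theta>) + c * (1 - cos \<theta>) * \<theta>' = 1"
    and "c' * (1 - cos \<theta>) + c * sin \<theta> * \<theta>' = \<delta> t * D t"
proof -
  obtain \<theta>' c' where d\<theta>: "(cycloid_angle \<delta> has_real_derivative \<theta>') (at t)"
    and dc: "(cycloid_scale \<delta> has_real_derivative c') (at t)"
    using cycloid_coordinates_differentiable[of t \<delta> D, OF t pos \<delta>'] .
  have near: "\<forall>\<^sub>F x in nhds t. 0 < x \<and> 0 < \<delta> x"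
    using t pos DERIV_isCont[OF \<delta>'] by (rule eventually_positive_nhds)
  have x_eq: "\<forall>\<^sub>F x in nhds t. x = cycloid_scale \<delta> x * (cycloid_angle \<delta> x - sin (cycloid_angle \<delta> x))"
    using near by eventually_elim (simp add: cycloid_point)
  have y_eq: "\<forall>\<^sub>F x in nhds t. \<delta> x ^ 2 / 2 = cycloid_scale \<delta> x * (1 - cos (cycloid_angle \<delta> x))"
    using near by eventually_elim (simp add: cycloid_point)
  have "((\<lambda>x. cycloid_scale \<delta> x * (cycloid_angle \<delta> x - sin (cycloid_angle \<delta> x))) has_real_derivative
      c' * (\<theta> - sin \<theta>) + c * (1 - cos \<theta>) * \<theta>') (at t)"
    using dc d\<theta> by (auto intro!: derivative_eq_intros simp: \<theta>_def c_def algebra_simps)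
  moreover have "((\<lambda>x. cycloid_scale \<delta> x * (cycloid_angle \<delta> x - sin (cycloid_angle \<delta> x))) has_real_derivative 1) (at t)"
    using DERIV_ident by (rule DERIV_cong_ev[OF refl x_eq refl, THEN iffD1])
  ultimately have x': "c' * (\<theta> - sin \<theta>) + c * (1 - cos \<theta>) * \<theta>' = 1"
    by (rule DERIV_unique)
  have "((\<lambda>x. \<delta> x ^ 2 / 2) has_real_derivative \<delta> t * D t) (at t)"
    using \<delta>' by (auto intro!: derivative_eq_intros)
  then have "((\<lambda>x. cycloid_scale \<delta> x * (1 - cos (cycloid_angle \<delta> x))) has_real_derivative \<delta> t * D t) (at t)"
    by (rule DERIV_cong_ev[OF refl y_eq refl, THEN iffD1])
  moreover have "((\<lambda>x. cycloid_scale \<delta> x * (1 - cos (cycloid_angle \<delta> x))) has_real_derivative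
      c' * (1 - cos \<theta>) + c * sin \<theta> * \<theta>') (at t)"
    using dc d\<theta> by (auto intro!: derivative_eq_intros simp: \<theta>_def c_def algebra_simps)
  ultimately have y': "c' * (1 - cos \<theta>) + c * sin \<theta> * \<theta>' = \<delta> t * D t"
    by (metis DERIV_unique)
  show ?thesis
    using that[OF d\<theta> dc x' y'] .
qed

lemma cycloid_time_has_derivative:
  assumes t: "0 < t" and pos: "0 < \<delta> t" and \<delta>': "(\<delta> has_real_derivative D t) (at t)"
  defines "\<theta> \<equiv> cycloid_angle \<delta> t"
  obtains c' where "(cycloid_scale \<delta> has_real_derivative c') (at t)"
    and "(cycloid_time \<delta> has_real_derivative cycloid_time_rate \<delta> D t) (at t)"
    and "cos (\<theta>/2) - \<delta> t * D t * sin (\<theta>/2) = c' * (\<theta> * cos (\<theta>/2) - 2 * sin (\<theta>/2))"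
proof -
  let ?c = "cycloid_scale \<delta> t"
  obtain \<theta>' c' where d\<theta>: "(cycloid_angle \<delta> has_real_derivative \<theta>') (at t)"
    and dc: "(cycloid_scale \<delta> has_real_derivative c') (at t)"
    and x': "c' * (\<theta> - sin \<theta>) + ?c * (1 - cos \<theta>) * \<theta>' = 1"
    and y': "c' * (1 - cos \<theta>) + ?c * sin \<theta> * \<theta>' = \<delta> t * D t"
    using cycloid_coordinates_has_derivative[of t \<delta> D, OF t pos \<delta>'] unfolding \<theta>_def by blast
  have c: "0 < ?c" and \<theta>: "0 < \<theta>" "\<theta> < 2*pi"
    using cycloid_scale_pos cycloid_angle_bounds t pos by (auto simp: \<theta>_def)
  note rates = cycloid_rates[OF c \<theta> x' y']
  have "\<delta> t ^ 2 = 2 * ?c * (1 - cos \<theta>)"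
    using cycloid_point(2)[of t \<delta>] t pos by (simp add: \<theta>_def)
  then have "sqrt (2 * ?c * (1 - cos \<theta>)) = \<delta> t"
    using pos by (metis less_imp_le real_sqrt_unique)
  with rates(1) have "\<delta> t * (c' * \<theta> / (2 * sqrt ?c) + sqrt ?c * \<theta>') =
      sin (\<theta>/2) + \<delta> t * D t * cos (\<theta>/2)"
    by simp
  with pos have "c' * \<theta> / (2 * sqrt ?c) + sqrt ?c * \<theta>' = cycloid_time_rate \<delta> D t"
    by (simp add: cycloid_time_rate_def \<theta>_def[symmetric] field_simps)
  moreover have "(cycloid_time \<delta> has_real_derivative c' * \<theta> / (2 * sqrt ?c) + sqrt ?c * \<theta>') (at t)"
    unfolding cycloid_time_def[abs_def] using dc d\<theta> c
    by (auto intro!: derivative_eq_intros simp: \<theta>_def field_simps)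
  ultimately show ?thesis
    using that dc rates(2) by simp
qed

lemma continuous_on_cycloid_functions:
  assumes A: "A \<subseteq> {0<..}" and pos: "\<And>t. t \<in> A \<Longrightarrow> 0 < \<delta> t"
    and \<delta>: "continuous_on A \<delta>" and D: "continuous_on A D"
  shows "continuous_on A (cycloid_scale \<delta>)" "continuous_on A (cycloid_time \<delta>)"
    "continuous_on A (cycloid_time_rate \<delta> D)" "continuous_on A (M_integrand \<delta> D)"
proof -
  have t: "0 < t" if "t \<in> A" for t
    using A that by auto
  then have "\<forall>t\<in>A. t \<noteq> 0"
    by force
  then have "continuous_on A (\<lambda>t. \<delta> t ^ 2 / 2 / t)"
    by (intro continuous_intros \<delta>) auto
  moreover have "0 < \<delta> t ^ 2 / 2 / t" if "t \<in> A" for t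
    using t[OF that] pos[OF that] by simp
  ultimately have \<theta>: "continuous_on A (cycloid_angle \<delta>)"
    unfolding cycloid_angle_def[abs_def]
    by (intro continuous_on_compose2[OF continuous_on_alpha_inv]) auto
  have bounds: "0 < cycloid_angle \<delta> t" "cycloid_angle \<delta> t < 2*pi" if "t \<in> A" for t
    using cycloid_angle_bounds t[OF that] pos[OF that] by auto
  have "1 - cos (cycloid_angle \<delta> t) \<noteq> 0" if "t \<in> A" for t
    using one_minus_cos_pos[OF bounds[OF that]] by simp
  then show c: "continuous_on A (cycloid_scale \<delta>)"
    unfolding cycloid_scale_def[abs_def] by (intro continuous_intros \<delta> \<theta>) auto
  show "continuous_on A (cycloid_time \<delta>)"
    unfolding cycloid_time_def[abs_def] by (intro continuous_intros c \<theta>)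
  show "continuous_on A (cycloid_time_rate \<delta> D)"
    unfolding cycloid_time_rate_def[abs_def] by (intro continuous_intros \<delta> D \<theta>) (use pos in force)+
  show "continuous_on A (M_integrand \<delta> D)"
    unfolding M_integrand_def[abs_def] by (intro continuous_intros \<delta> D) (use pos in force)
qed

lemma sq_le_cycloid_coordinates:
  fixes \<theta> :: real
  assumes "0 < \<theta>" "\<theta> < 2*pi"
  shows "\<theta>^2 \<le> 16 * ((\<theta> - sin \<theta>) + (1 - cos \<theta>))"
proof (cases "\<theta> \<le> 2")
  case True
  have "cos (pi/3) \<le> cos (\<theta>/2)"
    using True assms pi_gt3 by (intro cos_monotone_0_pi_le) auto
  then have "\<theta>/4 \<le> \<theta>/2 * cos (\<theta>/2)"
    using assms by (simp add: cos_60)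
  also have "\<dots> \<le> sin (\<theta>/2)"
    using x_cos_less_sin[of "\<theta>/2"] assms pi_gt3 by simp
  finally have "(\<theta>/4)^2 \<le> sin (\<theta>/2)^2"
    using assms by (intro power_mono) auto
  then have "\<theta>^2 \<le> 8 * (1 - cos \<theta>)"
    by (simp add: half_angle_one_minus_cos power_divide)
  moreover have "0 \<le> \<theta> - sin \<theta>"
    using sin_less_self assms by (simp add: less_imp_le)
  ultimately show ?thesis
    using cos_le_one[of \<theta>] by argo
next
  case False
  have "\<theta>^2 \<le> 8 * \<theta>"
    using assms pi_less_4 by (simp add: power2_eq_square)
  also have "\<dots> \<le> 16 * (\<theta> - sin \<theta>)"
    using False sin_le_one[of \<theta>] by argo
  finally show ?thesis
    using cos_le_one[of \<theta>] by argo
qed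

lemma cycloid_time_le:
  assumes "0 < t" "\<delta> t \<noteq> 0"
  shows "cycloid_time \<delta> t \<le> 4 * sqrt (t + \<delta> t ^ 2 / 2)"
proof -
  let ?\<theta> = "cycloid_angle \<delta> t" and ?c = "cycloid_scale \<delta> t"
  have c: "0 < ?c" and \<theta>: "0 < ?\<theta>" "?\<theta> < 2*pi"
    using cycloid_scale_pos cycloid_angle_bounds assms by auto
  have "cycloid_time \<delta> t ^ 2 = ?c * ?\<theta>^2"
    using c by (simp add: cycloid_time_def power_mult_distrib)
  also have "\<dots> \<le> ?c * (4^2 * ((?\<theta> - sin ?\<theta>) + (1 - cos ?\<theta>)))"
    using sq_le_cycloid_coordinates[OF \<theta>] c by simp
  also have "\<dots> = 4^2 * (t + \<delta> t ^ 2 / 2)"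
    using cycloid_point[of t \<delta>] assms by (simp add: algebra_simps)
  finally have "cycloid_time \<delta> t \<le> sqrt (4^2 * (t + \<delta> t ^ 2 / 2))"
    by (rule real_le_rsqrt)
  then show ?thesis
    by (simp only: real_sqrt_mult real_sqrt_abs)
qed

section \<open>Calibration along admissible curves\<close>

locale admissible_curve =
  fixes b :: real and \<delta> D :: "real \<Rightarrow> real"
  assumes b_pos: "0 < b"
    and continuous: "continuous_on {0..b} \<delta>"
    and start: "\<delta> 0 = 0"
    and deriv: "C1_deriv_on \<delta> b D"
    and pos: "\<And>t. t \<in> {0<..b} \<Longrightarrow> 0 < \<delta> t"
begin

lemma has_real_derivative_interior:
  assumes "0 < t" "t < b"
  shows "(\<delta> has_real_derivative D t) (at t)"
proof -
  have "(\<delta> has_real_derivative D t) (at t within {0<..b})"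
    using deriv assms by (simp add: C1_deriv_on_def)
  then have "(\<delta> has_real_derivative D t) (at t within {0<..<b})"
    by (rule DERIV_subset) auto
  moreover have "at t within {0<..<b} = at t"
    using assms by (intro at_within_open) auto
  ultimately show ?thesis
    by simp
qed

lemmas continuous_on_cycloid = continuous_on_cycloid_functions[where A="{0<..b}" and \<delta>=\<delta> and D=D,
  OF _ pos continuous_on_subset[OF continuous] deriv[unfolded C1_deriv_on_def, THEN conjunct2]]

lemma cycloid_time_tendsto_0: "(cycloid_time \<delta> \<longlongrightarrow> 0) (at_right 0)"
proof (rule tendsto_sandwich[where f="\<lambda>_. 0" and h="\<lambda>t. 4 * sqrt (t + \<delta> t ^ 2 / 2)"])
  have "(\<delta> \<longlongrightarrow> \<delta> 0) (at_right 0)"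
    using continuous b_pos by (rule continuous_on_Icc_at_rightD)
  then have "((\<lambda>t. 4 * sqrt (t + \<delta> t ^ 2 / 2)) \<longlongrightarrow> 4 * sqrt (0 + \<delta> 0 ^ 2 / 2)) (at_right 0)"
    by (intro tendsto_intros) auto
  then show "((\<lambda>t. 4 * sqrt (t + \<delta> t ^ 2 / 2)) \<longlongrightarrow> 0) (at_right 0)"
    by (simp add: start)
  have ev: "\<forall>\<^sub>F t in at_right 0. t \<in> {0<..<b}"
    using b_pos by (rule eventually_at_right_real)
  have lower: "0 \<le> cycloid_time \<delta> t" and upper: "cycloid_time \<delta> t \<le> 4 * sqrt (t + \<delta> t ^ 2 / 2)"
    if "t \<in> {0<..<b}" for t
    using that pos[of t] cycloid_angle_bounds[of t \<delta>] cycloid_scale_pos[of t \<delta>] cycloid_time_le[of t \<delta>]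
    by (simp_all add: cycloid_time_def)
  show "\<forall>\<^sub>F t in at_right 0. 0 \<le> cycloid_time \<delta> t"
    using ev lower by (rule eventually_mono)
  show "\<forall>\<^sub>F t in at_right 0. cycloid_time \<delta> t \<le> 4 * sqrt (t + \<delta> t ^ 2 / 2)"
    using ev upper by (rule eventually_mono)
qed simp

lemma cycloid_time_rate_has_integral:
  assumes "0 < a" "a \<le> e" "e \<le> b"
  shows "(cycloid_time_rate \<delta> D has_integral cycloid_time \<delta> e - cycloid_time \<delta> a) {a..e}"
proof (rule fundamental_theorem_of_calculus_interior[OF assms(2)])
  show "continuous_on {a..e} (cycloid_time \<delta>)"
    using assms by (intro continuous_on_subset[OF continuous_on_cycloid(2)]) auto
  fix t assume "t \<in> {a<..<e}"
  with assms have t: "0 < t" "t < b" "0 < \<delta> t"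
    using pos by auto
  have "(cycloid_time \<delta> has_real_derivative cycloid_time_rate \<delta> D t) (at t)"
    by (rule cycloid_time_has_derivative[of t \<delta> D, OF t(1,3) has_real_derivative_interior[OF t(1,2)]])
  then show "(cycloid_time \<delta> has_vector_derivative cycloid_time_rate \<delta> D t) (at t)"
    by (simp add: has_real_derivative_iff_has_vector_derivative)
qed

lemma cycloid_scale_deriv_zero_iff:
  assumes "0 < t" "t < b"
  shows "(cycloid_scale \<delta> has_real_derivative 0) (at t) \<longleftrightarrow> M_integrand \<delta> D t = cycloid_time_rate \<delta> D t"
proof -
  let ?\<theta> = "cycloid_angle \<delta> t"
  have \<delta>t: "0 < \<delta> t" using pos assms by simp
  obtain c' where c': "(cycloid_scale \<delta> has_real_derivative c') (at t)"
    and eq: "cos (?\<theta>/2) - \<delta> t * D t * sin (?\<theta>/2) = c' * (?\<theta> * cos (?\<theta>/2) - 2 * sin (?\<theta>/2))"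
    using cycloid_time_has_derivative[of t \<delta> D, OF assms(1) \<delta>t has_real_derivative_interior[OF assms]] by blast
  have "?\<theta>/2 * cos (?\<theta>/2) < sin (?\<theta>/2)"
    using x_cos_less_sin[of "?\<theta>/2"] cycloid_angle_bounds[of t \<delta>] assms \<delta>t by simp
  then have "?\<theta> * cos (?\<theta>/2) - 2 * sin (?\<theta>/2) \<noteq> 0" by simp
  then have "c' = 0 \<longleftrightarrow> cos (?\<theta>/2) = \<delta> t * D t * sin (?\<theta>/2)"
    using eq by auto
  also have "\<dots> \<longleftrightarrow> M_integrand \<delta> D t = cycloid_time_rate \<delta> D t"
    using cycloid_time_rate_le(2)[of t \<delta> D, OF assms(1) \<delta>t] by auto
  finally show ?thesis
    using c' DERIV_unique by blast
qed

lemma M_integrand_integrable_on: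
  assumes "0 < a" "a \<le> e" "e \<le> b"
  shows "M_integrand \<delta> D integrable_on {a..e}"
  using assms
  by (intro integrable_continuous_interval continuous_on_subset[OF continuous_on_cycloid(4)]) auto

lemma M_deficit_has_integral:
  assumes "0 < e" "e \<le> b"
  shows "((\<lambda>t. M_integrand \<delta> D t - cycloid_time_rate \<delta> D t) has_integral
           integral {e..b} (M_integrand \<delta> D) - (cycloid_time \<delta> b - cycloid_time \<delta> e)) {e..b}"
  using assms
  by (intro has_integral_diff integrable_integral M_integrand_integrable_on cycloid_time_rate_has_integral) auto

lemma M_deficit_nonneg: "t \<in> {0<..b} \<Longrightarrow> 0 \<le> M_integrand \<delta> D t - cycloid_time_rate \<delta> D t"
  using cycloid_time_rate_le(1)[of t \<delta> D] pos[of t] by simp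

lemma M_integral_eq_cycloid_time_iff:
  "(\<forall>e\<in>{0<..b}. integral {e..b} (M_integrand \<delta> D) = cycloid_time \<delta> b - cycloid_time \<delta> e) \<longleftrightarrow>
   (\<forall>t\<in>{0<..<b}. (cycloid_scale \<delta> has_real_derivative 0) (at t))"
proof
  assume eq: "\<forall>e\<in>{0<..b}. integral {e..b} (M_integrand \<delta> D) = cycloid_time \<delta> b - cycloid_time \<delta> e"
  show "\<forall>t\<in>{0<..<b}. (cycloid_scale \<delta> has_real_derivative 0) (at t)"
  proof
    fix t assume t: "t \<in> {0<..<b}"
    let ?g = "\<lambda>t. M_integrand \<delta> D t - cycloid_time_rate \<delta> D t"
    have "?g t = 0"
    proof (rule has_integral_0_cbox_imp_0[of "t/2" b ?g])
      show "continuous_on (cbox (t/2) b) ?g"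
        using t by (auto intro!: continuous_intros continuous_on_subset[OF continuous_on_cycloid(3)]
            continuous_on_subset[OF continuous_on_cycloid(4)])
      show "(?g has_integral 0) (cbox (t/2) b)"
        using M_deficit_has_integral[of "t/2"] eq t by simp
    qed (use t M_deficit_nonneg in auto)
    then show "(cycloid_scale \<delta> has_real_derivative 0) (at t)"
      using cycloid_scale_deriv_zero_iff t by simp
  qed
next
  assume "\<forall>t\<in>{0<..<b}. (cycloid_scale \<delta> has_real_derivative 0) (at t)"
  then have rate: "M_integrand \<delta> D t = cycloid_time_rate \<delta> D t" if "t \<in> {0<..<b}" for t
    using cycloid_scale_deriv_zero_iff that by simp
  show "\<forall>e\<in>{0<..b}. integral {e..b} (M_integrand \<delta> D) = cycloid_time \<delta> b - cycloid_time \<delta> e"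
  proof
    fix e assume e: "e \<in> {0<..b}"
    have "(M_integrand \<delta> D has_integral cycloid_time \<delta> b - cycloid_time \<delta> e) {e..b}"
      using e rate by (intro has_integral_spike_finite[of "{b}", OF _ _ cycloid_time_rate_has_integral]) auto
    then show "integral {e..b} (M_integrand \<delta> D) = cycloid_time \<delta> b - cycloid_time \<delta> e"
      by (rule integral_unique)
  qed
qed

text \<open>The deficit \<open>E e = \<integral>\<^sub>e\<^sup>b (M_integrand - cycloid_time_rate)\<close> is nonnegative and grows as \<open>e\<close>
  decreases, while its limit at \<open>0\<close> is \<open>I - cycloid_time \<delta> b \<le> 0\<close>; hence it vanishes.\<close>

lemma M_integral_eq_cycloid_time_if_M_limit_le:
  assumes lim: "((\<lambda>e. integral {e..b} (M_integrand \<delta> D)) \<longlongrightarrow> I) (at_right 0)"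
    and le: "I \<le> cycloid_time \<delta> b"
  shows "\<forall>e\<in>{0<..b}. integral {e..b} (M_integrand \<delta> D) = cycloid_time \<delta> b - cycloid_time \<delta> e"
proof
  fix e assume e: "e \<in> {0<..b}"
  let ?g = "\<lambda>t. M_integrand \<delta> D t - cycloid_time_rate \<delta> D t"
  define E where "E x = integral {x..b} (M_integrand \<delta> D) - (cycloid_time \<delta> b - cycloid_time \<delta> x)" for x
  have E: "(?g has_integral E x) {x..b}" if "x \<in> {0<..b}" for x
    using M_deficit_has_integral that by (simp add: E_def)
  have "E e \<le> E x" if x: "x \<in> {0<..<e}" for x
  proof -
    have int: "?g integrable_on {x..b}"
      using E[of x] x e by (auto intro: has_integral_integrable)
    have "integral {x..e} ?g + integral {e..b} ?g = integral {x..b} ?g"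
      by (rule Henstock_Kurzweil_Integration.integral_combine[OF _ _ int]) (use x e in auto)
    moreover have "0 \<le> integral {x..e} ?g"
      using x e M_deficit_nonneg
      by (intro integral_nonneg integrable_on_subinterval[OF int]) auto
    moreover have "integral {x..b} ?g = E x" "integral {e..b} ?g = E e"
      using x e by (auto intro!: integral_unique E)
    ultimately show ?thesis
      by linarith
  qed
  moreover have "(E \<longlongrightarrow> I - (cycloid_time \<delta> b - 0)) (at_right 0)"
    unfolding E_def by (intro tendsto_intros lim cycloid_time_tendsto_0)
  ultimately have "E e \<le> I - cycloid_time \<delta> b"
    using e eventually_at_right_real[of 0 e]
    by (intro tendsto_le[OF trivial_limit_at_right_real _ tendsto_const]) (auto elim: eventually_mono)
  moreover have "0 \<le> E e"
    using has_integral_nonneg[OF E[OF e]] M_deficit_nonneg e by force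
  ultimately show "integral {e..b} (M_integrand \<delta> D) = cycloid_time \<delta> b - cycloid_time \<delta> e"
    using le by (simp add: E_def)
qed

lemma cycloid_scale_eq_endpoint:
  assumes "\<forall>t\<in>{0<..<b}. (cycloid_scale \<delta> has_real_derivative 0) (at t)" "t \<in> {0<..b}"
  shows "cycloid_scale \<delta> t = cycloid_scale \<delta> b"
proof (cases "t = b")
  case False
  with assms have "cycloid_scale \<delta> b = cycloid_scale \<delta> t"
    by (intro DERIV_isconst_end[of t b] continuous_on_subset[OF continuous_on_cycloid(1)]) auto
  then show ?thesis ..
qed simp

end

lemma dY_C1_deriv_on:
  assumes "\<exists>D. C1_deriv_on \<delta> b D"
  shows "C1_deriv_on \<delta> b (dY \<delta> b)"
  using assms unfolding dY_def by (rule someI_ex)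

lemma Y_admissible_curve:
  assumes "0 < b" "\<delta> \<in> Y b \<beta>"
  shows "admissible_curve b \<delta> (dY \<delta> b)"
  using assms dY_C1_deriv_on[of \<delta> b] by unfold_locales (auto simp: Y_def)

lemma M_int_eq: "M_int b \<delta> = (\<lambda>e. integral {e..b} (M_integrand \<delta> (dY \<delta> b)))"
  unfolding M_int_def[abs_def] M_integrand_def[abs_def] ..

lemma M_eq_limit: "(M_int b \<delta> \<longlongrightarrow> I) (at_right 0) \<Longrightarrow> M b \<delta> = I"
  unfolding M_def by (rule tendsto_Lim[OF trivial_limit_at_right_real])

section \<open>The cycloid arc \<open>delta0\<close>\<close>

definition diff_sin_inv :: "real \<Rightarrow> real" where
  "diff_sin_inv = the_inv_into {0..2*pi} (\<lambda>\<theta>. \<theta> - sin \<theta>)"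

lemma inj_on_diff_sin: "inj_on (\<lambda>\<theta>::real. \<theta> - sin \<theta>) {0..2*pi}"
  using diff_sin_strict_mono_on by (rule strict_mono_on_imp_inj_on)

lemma diff_sin_image: "(\<lambda>\<theta>::real. \<theta> - sin \<theta>) ` {0..2*pi} = {0..2*pi}"
proof
  show "(\<lambda>\<theta>. \<theta> - sin \<theta>) ` {0..2*pi} \<subseteq> {0..2*pi}"
    using strict_mono_on_leD[OF diff_sin_strict_mono_on, of 0] strict_mono_on_leD[OF diff_sin_strict_mono_on, of _ "2*pi"]
    by fastforce
  show "{0..2*pi} \<subseteq> (\<lambda>\<theta>. \<theta> - sin \<theta>) ` {0..2*pi}"
  proof
    fix s :: real assume "s \<in> {0..2*pi}"
    moreover have "continuous_on {0..2*pi} (\<lambda>\<theta>::real. \<theta> - sin \<theta>)"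
      by (intro continuous_intros)
    ultimately obtain \<theta> where "0 \<le> \<theta>" "\<theta> \<le> 2*pi" "\<theta> - sin \<theta> = s"
      using IVT'[of "\<lambda>\<theta>. \<theta> - sin \<theta>" 0 s "2*pi"] by auto
    then show "s \<in> (\<lambda>\<theta>. \<theta> - sin \<theta>) ` {0..2*pi}" by force
  qed
qed

lemma diff_sin_inv:
  assumes "s \<in> {0..2*pi}"
  shows "diff_sin_inv s \<in> {0..2*pi}" "diff_sin_inv s - sin (diff_sin_inv s) = s"
  using the_inv_into_into[OF inj_on_diff_sin, of s "{0..2*pi}"] f_the_inv_into_f[OF inj_on_diff_sin, of s] assms
  by (simp_all add: diff_sin_inv_def diff_sin_image)

lemma diff_sin_inv_diff_sin: "\<theta> \<in> {0..2*pi} \<Longrightarrow> diff_sin_inv (\<theta> - sin \<theta>) = \<theta>"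
  unfolding diff_sin_inv_def by (rule the_inv_into_f_f[OF inj_on_diff_sin])

lemma continuous_on_diff_sin_inv: "continuous_on {0..2*pi} diff_sin_inv"
  using continuous_on_inv[of "{0..2*pi}" "\<lambda>\<theta>. \<theta> - sin \<theta>" diff_sin_inv]
  by (simp add: diff_sin_image diff_sin_inv_diff_sin continuous_intros)

lemma diff_sin_inv_has_derivative:
  assumes "0 < s" "s < 2*pi"
  shows "(diff_sin_inv has_real_derivative inverse (1 - cos (diff_sin_inv s))) (at s)"
proof -
  have "diff_sin_inv s \<noteq> 0" "diff_sin_inv s \<noteq> 2*pi"
    using diff_sin_inv[of s] assms by auto
  then have "0 < diff_sin_inv s" "diff_sin_inv s < 2*pi"
    using diff_sin_inv(1)[of s] assms by auto
  then show ?thesis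
    using assms diff_sin_inv(2) one_minus_cos_pos
    by (intro DERIV_inverse_function[where f="\<lambda>\<theta>. \<theta> - sin \<theta>" and a=0 and b="2*pi"]
        derivative_eq_intros continuous_on_interior[OF continuous_on_diff_sin_inv])
       (auto simp: less_imp_neq[symmetric])
qed

locale cycloid_arc =
  fixes b \<beta> :: real
  assumes b_pos: "0 < b" and \<beta>_pos: "0 < \<beta>"
begin

lemma theta_t_spec: "0 < theta_t b \<beta>" "theta_t b \<beta> < 2*pi" "alpha (theta_t b \<beta>) = \<beta> / b"
proof -
  have "theta_t b \<beta> = alpha_inv (\<beta> / b)"
    by (simp add: theta_t_def alpha_inv_def)
  then show "0 < theta_t b \<beta>" "theta_t b \<beta> < 2*pi" "alpha (theta_t b \<beta>) = \<beta> / b"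
    using alpha_inv[of "\<beta> / b"] b_pos \<beta>_pos by auto
qed

lemma kk_pos: "0 < kk b \<beta>"
  using one_minus_cos_pos[OF theta_t_spec(1,2)] \<beta>_pos by (simp add: kk_def)

lemma kk_endpoint:
  "b = kk b \<beta> / 2 * (theta_t b \<beta> - sin (theta_t b \<beta>))"
  "\<beta> = kk b \<beta> / 2 * (1 - cos (theta_t b \<beta>))"
proof -
  let ?\<theta> = "theta_t b \<beta>"
  have u: "0 < 1 - cos ?\<theta>" and v: "0 < ?\<theta> - sin ?\<theta>"
    using one_minus_cos_pos[OF theta_t_spec(1,2)] sin_less_self[OF theta_t_spec(1)] by auto
  have "(1 - cos ?\<theta>) * b = \<beta> * (?\<theta> - sin ?\<theta>)"
    using theta_t_spec(3) b_pos v by (simp add: alpha_def field_simps)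
  with u show "b = kk b \<beta> / 2 * (?\<theta> - sin ?\<theta>)"
    by (simp add: kk_def field_simps)
  from u show "\<beta> = kk b \<beta> / 2 * (1 - cos ?\<theta>)"
    by (simp add: kk_def field_simps)
qed

definition arc_angle :: "real \<Rightarrow> real" where
  "arc_angle t = diff_sin_inv (2 * t / kk b \<beta>)"

lemma arc_abscissa_bounds:
  assumes "t \<in> {0..b}"
  shows "0 \<le> 2 * t / kk b \<beta>" "2 * t / kk b \<beta> \<le> theta_t b \<beta> - sin (theta_t b \<beta>)"
    and "2 * t / kk b \<beta> < 2*pi"
proof -
  show "0 \<le> 2 * t / kk b \<beta>"
    using assms kk_pos by simp
  show "2 * t / kk b \<beta> \<le> theta_t b \<beta> - sin (theta_t b \<beta>)"
    using assms kk_pos kk_endpoint(1) by (simp add: field_simps)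
  also have "\<dots> < 2*pi - sin (2*pi)"
    using theta_t_spec by (intro strict_mono_onD[OF diff_sin_strict_mono_on]) auto
  finally show "2 * t / kk b \<beta> < 2*pi"
    by simp
qed

lemma arc_angle:
  assumes "t \<in> {0..b}"
  shows "arc_angle t \<in> {0..theta_t b \<beta>}" "t = kk b \<beta> / 2 * (arc_angle t - sin (arc_angle t))"
proof -
  note s = arc_abscissa_bounds[OF assms]
  have inv: "arc_angle t \<in> {0..2*pi}" "arc_angle t - sin (arc_angle t) = 2 * t / kk b \<beta>"
    using diff_sin_inv[of "2 * t / kk b \<beta>"] s by (auto simp: arc_angle_def)
  then show "t = kk b \<beta> / 2 * (arc_angle t - sin (arc_angle t))"
    using kk_pos by simp
  have "arc_angle t \<le> theta_t b \<beta>"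
    using strict_mono_on_less_eq[OF diff_sin_strict_mono_on inv(1), of "theta_t b \<beta>"] inv(2) s(2)
      theta_t_spec by simp
  with inv(1) show "arc_angle t \<in> {0..theta_t b \<beta>}"
    by simp
qed

lemma arc_angle_bounds:
  assumes "t \<in> {0<..b}"
  shows "0 < arc_angle t" "arc_angle t < 2*pi"
  using arc_angle[of t] assms theta_t_spec(2) by (auto simp: less_eq_real_def)

lemma arc_angle_0: "arc_angle 0 = 0"
  using diff_sin_inv_diff_sin[of 0] by (simp add: arc_angle_def)

lemma arc_angle_b: "arc_angle b = theta_t b \<beta>"
proof -
  have "2 * b / kk b \<beta> = theta_t b \<beta> - sin (theta_t b \<beta>)"
    using kk_endpoint(1) kk_pos by (simp add: field_simps)
  then show ?thesis
    using diff_sin_inv_diff_sin[of "theta_t b \<beta>"] theta_t_spec by (simp add: arc_angle_def)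
qed

lemma continuous_on_arc_angle: "continuous_on {0..b} arc_angle"
proof -
  have "(\<lambda>t. 2 * t / kk b \<beta>) ` {0..b} \<subseteq> {0..2*pi}"
    using arc_abscissa_bounds(1,3) by (fastforce simp: less_imp_le)
  moreover have "continuous_on {0..b} (\<lambda>t. 2 * t / kk b \<beta>)"
    using kk_pos by (intro continuous_intros) auto
  ultimately show ?thesis
    unfolding arc_angle_def[abs_def] by (intro continuous_on_compose2[OF continuous_on_diff_sin_inv]) auto
qed

lemma arc_angle_has_derivative:
  assumes "t \<in> {0<..b}"
  shows "(arc_angle has_real_derivative inverse (1 - cos (arc_angle t)) * (2 / kk b \<beta>)) (at t)"
proof -
  have "0 < 2 * t / kk b \<beta>" "2 * t / kk b \<beta> < 2*pi"
    using assms kk_pos arc_abscissa_bounds[of t] by auto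
  then have "(diff_sin_inv has_real_derivative inverse (1 - cos (arc_angle t))) (at (2 * t / kk b \<beta>))"
    unfolding arc_angle_def by (rule diff_sin_inv_has_derivative)
  moreover have "((\<lambda>t. 2 * t / kk b \<beta>) has_real_derivative 2 / kk b \<beta>) (at t)"
    using kk_pos by (auto intro!: derivative_eq_intros)
  ultimately show ?thesis
    unfolding arc_angle_def[abs_def] by (rule DERIV_chain2)
qed

lemma gamma0_eq:
  assumes "t \<in> {0..b}"
  shows "gamma0 b \<beta> t = kk b \<beta> / 2 * (1 - cos (arc_angle t))"
proof -
  have "(THE \<theta>. \<theta> \<in> {0..theta_t b \<beta>} \<and> kk b \<beta> / 2 * (\<theta> - sin \<theta>) = t) = arc_angle t"
  proof (rule the_equality)
    show "arc_angle t \<in> {0..theta_t b \<beta>} \<and> kk b \<beta> / 2 * (arc_angle t - sin (arc_angle t)) = t"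
      using arc_angle assms by auto
    fix \<theta> assume \<theta>: "\<theta> \<in> {0..theta_t b \<beta>} \<and> kk b \<beta> / 2 * (\<theta> - sin \<theta>) = t"
    then have "\<theta> = diff_sin_inv (\<theta> - sin \<theta>)"
      using theta_t_spec(2) by (intro diff_sin_inv_diff_sin[symmetric]) auto
    also have "\<theta> - sin \<theta> = 2 * t / kk b \<beta>"
      using \<theta> kk_pos by (auto simp: field_simps)
    finally show "\<theta> = arc_angle t"
      by (simp add: arc_angle_def)
  qed
  then show ?thesis
    by (simp add: gamma0_def)
qed

lemma delta0_eq: "t \<in> {0..b} \<Longrightarrow> delta0 b \<beta> t = sqrt (kk b \<beta> * (1 - cos (arc_angle t)))"
  by (simp add: delta0_def gamma0_eq)

lemma cycloid_coordinates_delta0: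
  assumes "t \<in> {0<..b}"
  shows "cycloid_angle (delta0 b \<beta>) t = arc_angle t" "cycloid_scale (delta0 b \<beta>) t = kk b \<beta> / 2"
proof -
  have "0 \<le> kk b \<beta> * (1 - cos (arc_angle t))"
    using kk_pos by simp
  then have y: "delta0 b \<beta> t ^ 2 / 2 = kk b \<beta> / 2 * (1 - cos (arc_angle t))"
    using assms by (simp add: delta0_eq)
  have t: "0 < t" and k: "0 < kk b \<beta> / 2" and \<theta>: "0 < arc_angle t" "arc_angle t < 2*pi"
    and x: "t = kk b \<beta> / 2 * (arc_angle t - sin (arc_angle t))"
    using assms arc_angle(2)[of t] arc_angle_bounds[of t] kk_pos by auto
  show "cycloid_angle (delta0 b \<beta>) t = arc_angle t" "cycloid_scale (delta0 b \<beta>) t = kk b \<beta> / 2"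
    using cycloid_coordinates_unique[where \<delta>="delta0 b \<beta>", OF t k \<theta> x y] by auto
qed

definition delta0_deriv :: "real \<Rightarrow> real" where
  "delta0_deriv t = sin (arc_angle t) / ((1 - cos (arc_angle t)) * sqrt (kk b \<beta> * (1 - cos (arc_angle t))))"

lemma delta0_C1_deriv_on: "C1_deriv_on (delta0 b \<beta>) b delta0_deriv"
  unfolding C1_deriv_on_def
proof
  have pos: "0 < 1 - cos (arc_angle t)" "0 < kk b \<beta> * (1 - cos (arc_angle t))" if "t \<in> {0<..b}" for t
    using kk_pos one_minus_cos_pos[OF arc_angle_bounds] that by auto
  show "\<forall>t\<in>{0<..b}. (delta0 b \<beta> has_real_derivative delta0_deriv t) (at t within {0<..b})"
  proof
    fix t assume t: "t \<in> {0<..b}"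
    let ?g = "arc_angle t"
    have "((\<lambda>t. kk b \<beta> * (1 - cos (arc_angle t))) has_real_derivative
        kk b \<beta> * (sin ?g * (inverse (1 - cos ?g) * (2 / kk b \<beta>)))) (at t)"
      using arc_angle_has_derivative[OF t] by (auto intro!: derivative_eq_intros)
    then have "((\<lambda>t. sqrt (kk b \<beta> * (1 - cos (arc_angle t)))) has_real_derivative
        inverse (sqrt (kk b \<beta> * (1 - cos ?g))) / 2 * (kk b \<beta> * (sin ?g * (inverse (1 - cos ?g) * (2 / kk b \<beta>))))) (at t)"
      by (rule DERIV_chain2[where g="\<lambda>t. kk b \<beta> * (1 - cos (arc_angle t))", OF DERIV_real_sqrt[OF pos(2)[OF t]]])
    moreover have "inverse (sqrt (kk b \<beta> * (1 - cos ?g))) / 2 *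
        (kk b \<beta> * (sin ?g * (inverse (1 - cos ?g) * (2 / kk b \<beta>)))) = delta0_deriv t"
    proof -
      have "inverse (sqrt (k * u)) / 2 * (k * (x * (inverse u * (2 / k)))) = x / (u * sqrt (k * u))"
        if "0 < k" "0 < u" for k u x :: real
        using that by (simp add: field_simps)
      then show ?thesis
        using kk_pos pos(1)[OF t] by (simp add: delta0_deriv_def)
    qed
    ultimately have "((\<lambda>t. sqrt (kk b \<beta> * (1 - cos (arc_angle t)))) has_real_derivative delta0_deriv t)
        (at t within {0<..b})"
      by (simp add: has_field_derivative_at_within)
    then show "(delta0 b \<beta> has_real_derivative delta0_deriv t) (at t within {0<..b})"
      by (rule has_field_derivative_transform_within[OF _ zero_less_one t]) (simp add: delta0_eq)
  qed
  have "continuous_on {0<..b} arc_angle"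
    by (rule continuous_on_subset[OF continuous_on_arc_angle]) auto
  moreover have "\<forall>t\<in>{0<..b}. (1 - cos (arc_angle t)) * sqrt (kk b \<beta> * (1 - cos (arc_angle t))) \<noteq> 0"
  proof
    fix t assume "t \<in> {0<..b}"
    then show "(1 - cos (arc_angle t)) * sqrt (kk b \<beta> * (1 - cos (arc_angle t))) \<noteq> 0"
      using pos[of t] kk_pos by simp
  qed
  ultimately show "continuous_on {0<..b} delta0_deriv"
    unfolding delta0_deriv_def[abs_def] by (intro continuous_intros)
qed

lemma delta0_continuous_on: "continuous_on {0..b} (delta0 b \<beta>)"
proof -
  have "continuous_on {0..b} (\<lambda>t. sqrt (kk b \<beta> * (1 - cos (arc_angle t))))"
    by (intro continuous_intros continuous_on_arc_angle)
  then show ?thesis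
    by (rule continuous_on_cong[THEN iffD1, OF refl, rotated]) (simp add: delta0_eq)
qed

lemma delta0_pos: "t \<in> {0<..b} \<Longrightarrow> 0 < delta0 b \<beta> t"
  using kk_pos one_minus_cos_pos[OF arc_angle_bounds, of t] by (simp add: delta0_eq)

lemma delta0_start: "delta0 b \<beta> 0 = 0"
  using b_pos by (simp add: delta0_eq arc_angle_0)

lemma delta0_end: "delta0 b \<beta> b = sqrt (2 * \<beta>)"
  using b_pos kk_endpoint(2) by (simp add: delta0_eq arc_angle_b)

lemma delta0_admissible: "admissible_curve b (delta0 b \<beta>) (dY (delta0 b \<beta>) b)"
  using b_pos delta0_continuous_on delta0_start delta0_pos dY_C1_deriv_on delta0_C1_deriv_on
  by unfold_locales blast+

lemma delta0_M_int_tendsto: "(M_int b (delta0 b \<beta>) \<longlongrightarrow> cycloid_time (delta0 b \<beta>) b) (at_right 0)"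
proof -
  interpret admissible_curve b "delta0 b \<beta>" "dY (delta0 b \<beta>) b"
    by (rule delta0_admissible)
  have "(cycloid_scale (delta0 b \<beta>) has_real_derivative 0) (at t)" if "t \<in> {0<..<b}" for t
  proof (rule has_field_derivative_transform_within_open[where S="{0<..<b}"])
    show "((\<lambda>_. kk b \<beta> / 2) has_real_derivative 0) (at t)"
      by simp
  qed (use that cycloid_coordinates_delta0(2) in auto)
  then have eq: "\<forall>e\<in>{0<..b}. M_int b (delta0 b \<beta>) e = cycloid_time (delta0 b \<beta>) b - cycloid_time (delta0 b \<beta>) e"
    using M_integral_eq_cycloid_time_iff by (simp add: M_int_eq)
  have "((\<lambda>e. cycloid_time (delta0 b \<beta>) b - cycloid_time (delta0 b \<beta>) e) \<longlongrightarrow> cycloid_time (delta0 b \<beta>) b - 0) (at_right 0)"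
    by (intro tendsto_intros cycloid_time_tendsto_0)
  moreover have "\<forall>\<^sub>F e in at_right 0. cycloid_time (delta0 b \<beta>) b - cycloid_time (delta0 b \<beta>) e = M_int b (delta0 b \<beta>) e"
    using eventually_at_right_real[OF b_pos] by eventually_elim (simp add: eq)
  ultimately show ?thesis
    by (simp add: Lim_transform_eventually)
qed

lemma delta0_in_Y: "delta0 b \<beta> \<in> Y b \<beta>"
  using delta0_continuous_on delta0_C1_deriv_on delta0_pos delta0_start delta0_end delta0_M_int_tendsto
  unfolding Y_def M_defined_def by blast

lemma eq_delta0_if_cycloid_scale:
  assumes t: "t \<in> {0<..b}" and pos: "0 < \<delta> t" and c: "cycloid_scale \<delta> t = kk b \<beta> / 2"
  shows "\<delta> t = delta0 b \<beta> t"
proof -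
  let ?\<theta> = "cycloid_angle \<delta> t"
  have \<theta>: "?\<theta> \<in> {0..2*pi}"
    using cycloid_angle_bounds[of t \<delta>] t pos by auto
  have "?\<theta> - sin ?\<theta> = 2 * t / kk b \<beta>"
    using cycloid_point(1)[of t \<delta>] t pos kk_pos c by (simp add: field_simps)
  then have "?\<theta> = arc_angle t"
    using diff_sin_inv_diff_sin[OF \<theta>] by (simp add: arc_angle_def)
  then have "\<delta> t ^ 2 = kk b \<beta> * (1 - cos (arc_angle t))"
    using cycloid_point(2)[of t \<delta>] t pos c by simp
  then show ?thesis
    using t pos by (simp add: delta0_eq real_sqrt_unique less_imp_le)
qed

lemma M_delta0_less:
  assumes Y: "\<delta> \<in> Y b \<beta>" and differs: "\<exists>t\<in>{0..b}. \<delta> t \<noteq> delta0 b \<beta> t"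
  shows "M b (delta0 b \<beta>) < M b \<delta>"
proof (rule ccontr)
  interpret admissible_curve b \<delta> "dY \<delta> b"
    using Y_admissible_curve[OF b_pos Y] .
  obtain I where lim: "(M_int b \<delta> \<longlongrightarrow> I) (at_right 0)"
    using Y by (auto simp: Y_def M_defined_def)
  have "\<delta> b = delta0 b \<beta> b"
    using Y delta0_end by (simp add: Y_def)
  then have same_end: "cycloid_time \<delta> b = cycloid_time (delta0 b \<beta>) b"
    "cycloid_scale \<delta> b = cycloid_scale (delta0 b \<beta>) b"
    by (simp_all add: cycloid_time_def cycloid_scale_def cycloid_angle_def)
  assume "\<not> M b (delta0 b \<beta>) < M b \<delta>"
  then have "I \<le> cycloid_time \<delta> b"
    using M_eq_limit[OF lim] M_eq_limit[OF delta0_M_int_tendsto] same_end by simp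
  then have "\<forall>t\<in>{0<..<b}. (cycloid_scale \<delta> has_real_derivative 0) (at t)"
    using M_integral_eq_cycloid_time_if_M_limit_le lim M_integral_eq_cycloid_time_iff
    by (simp add: M_int_eq)
  then have "cycloid_scale \<delta> t = kk b \<beta> / 2" if "t \<in> {0<..b}" for t
    using cycloid_scale_eq_endpoint that same_end(2) cycloid_coordinates_delta0(2)[of b] b_pos by simp
  then have "\<delta> t = delta0 b \<beta> t" if "t \<in> {0..b}" for t
    using that start delta0_start pos eq_delta0_if_cycloid_scale by (cases "t = 0") auto
  with differs show False by blast
qed

end

theorem proposition4:
  fixes b \<beta> :: real
  assumes "b > 0" and "\<beta> > 0"
  shows "delta0 b \<beta> \<in> Y b \<beta> \<and>
         (\<forall>\<delta>\<in>Y b \<beta>. (\<exists>t\<in>{0..b}. \<delta> t \<noteq> delta0 b \<beta> t) \<longrightarrow> M b (delta0 b \<beta>) < M b \<delta>)"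
proof -
  interpret cycloid_arc b \<beta>
    using assms by unfold_locales
  show ?thesis
    using delta0_in_Y M_delta0_less by blast
qed

end
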